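(* Let $n\in\mathbb N$ with $n\ge 15$. Then $$\mathrm{ex}(2n-9;T_n^3)=n^2-10n+24+\max\Big\{\Big\lfloor\frac n2\Big\rfloor,13\Big\}.$$
   Context: All graphs are finite simple graphs. For a graph $L$, $\mathrm{ex}(p;L)$ denotes the maximum number of edges in a graph on $p$ vertices that contains no subgraph isomorphic to $L$. For $n\ge 6$, $T_n^3$ is the tree on vertex set $\{v_0,\ldots,v_{n-1}\}$ with edge set $\{v_0v_1,v_0v_2,\ldots,v_0v_{n-4},\ v_1v_{n-3},\ v_1v_{n-2},\ v_1v_{n-1}\}$. $\lfloor x\rfloor$ is the greatest integer not exceeding $x$. *)

theory Defs
  imports Main
begin

definition simple_graph_on :: "'a set \<Rightarrow> 'a set set \<Rightarrow> bool" where
  "simple_graph_on V E \<longleftrightarrow> finite V \<and>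
     E \<subseteq> {e. \<exists>u v. e = {u, v} \<and> u \<noteq> v \<and> u \<in> V \<and> v \<in> V}"

definition contains_copy :: "'a set \<Rightarrow> 'a set set \<Rightarrow> 'b set \<Rightarrow> 'b set set \<Rightarrow> bool" where
  "contains_copy VG EG VL EL \<longleftrightarrow>
     (\<exists>f. inj_on f VL \<and> f ` VL \<subseteq> VG \<and> (\<forall>e\<in>EL. f ` e \<in> EG))"

definition ex :: "nat \<Rightarrow> 'b set \<Rightarrow> 'b set set \<Rightarrow> nat" where
  "ex p VL EL = Max {card E | E. simple_graph_on {0..<p} E \<and>
                    \<not> contains_copy {0..<p} E VL EL}"

definition T3_vertices :: "nat \<Rightarrow> nat set" where
  "T3_vertices n = {0..<n}"

definition T3_edges :: "nat \<Rightarrow> nat set set" where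
  "T3_edges n = {{0, i} | i. 1 \<le> i \<and> i \<le> n - 4} \<union>
                {{1, n - 3}, {1, n - 2}, {1, n - 1}}"

end

theory Submission
  imports Defs
begin

text \<open>
  Write \<open>n = k + 5\<close>, so that the host graphs have \<open>2k + 1\<close> vertices and \<open>k \<ge> 10\<close>.
  A graph contains \<open>T\<^sub>n\<^sup>3\<close> iff it has an edge \<open>xw\<close> with \<open>d(x) \<ge> k + 1\<close>, \<open>d(w) \<ge> 4\<close> and
  \<open>|N(x) \<union> N(w)| \<ge> k + 5\<close>; \<open>x\<close> and \<open>w\<close> play the roles of \<open>v\<^sub>0\<close> and \<open>v\<^sub>1\<close>.

  For the upper bound fix a vertex \<open>u\<close> of maximum degree and split the remaining vertices
  into \<open>A = N(u)\<close> and \<open>R\<close>. Applied to the edges \<open>uw\<close>, the forbidden configuration says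
  that a vertex \<open>w \<in> A\<close> of degree at least 4 has at most \<open>k + 3 - |A|\<close> neighbours in \<open>R\<close>;
  counting the edges between \<open>A\<close> and \<open>R\<close> from both sides then bounds the degree sum by
  \<open>2k\<^sup>2 + max (k + 3) 24\<close>, by a case analysis on \<open>|A|\<close>. Only \<open>|A| = k + 1\<close> is delicate: it
  is settled by looking at the vertices of \<open>R\<close> adjacent to a vertex of degree \<open>k + 1\<close>, and at
  the vertices of \<open>A\<close> whose degree falls short.

  The bound \<open>k\<^sup>2 + max \<lfloor>(k + 3)/2\<rfloor> 12\<close> is attained by \<open>K\<^bsub>k+4\<^esub> \<union> K\<^bsub>k-3\<^esub>\<close> and by a graph of
  maximum degree \<open>k + 1\<close> in which the vertices of degree \<open>k + 1\<close> see only a clique of size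
  \<open>k + 2\<close>, and every other vertex of that clique has at most two neighbours outside it.
\<close>

lemma sum_card_Collect_swap:
  assumes "finite A" "finite B"
  shows "(\<Sum>a\<in>A. card {b\<in>B. P a b}) = (\<Sum>b\<in>B. card {a\<in>A. P a b})"
proof -
  have "(\<Sum>a\<in>A. card {b\<in>B. P a b}) = (\<Sum>a\<in>A. \<Sum>b\<in>B. if P a b then 1 else 0)"
    using assms by (simp add: sum.If_cases Int_def)
  also have "\<dots> = (\<Sum>b\<in>B. \<Sum>a\<in>A. if P a b then 1 else 0)" by (rule sum.swap)
  also have "\<dots> = (\<Sum>b\<in>B. card {a\<in>A. P a b})"
    using assms by (simp add: sum.If_cases Int_def)
  finally show ?thesis .
qed

lemma obtain_subset_with_large_Diff:
  assumes fin: "finite P" "finite Q"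
    and card: "m \<le> card P" "k \<le> card Q" "k + m \<le> card (P \<union> Q)"
  obtains S where "S \<subseteq> P" "card S = m" "k \<le> card (Q - S)"
proof -
  define j where "j = min m (card (P - Q))"
  obtain S1 where S1: "S1 \<subseteq> P - Q" "card S1 = j"
    using obtain_subset_with_card_n[of j "P - Q"] j_def by auto
  have "m - j \<le> card (P \<inter> Q)"
    using card_Int_Diff[OF fin(1), of Q] card(1) j_def by linarith
  then obtain S2 where S2: "S2 \<subseteq> P \<inter> Q" "card S2 = m - j"
    using obtain_subset_with_card_n by metis
  have fin_S: "finite S1" "finite S2" using S1 S2 fin finite_subset by blast+
  have "card (S1 \<union> S2) = m"
    using card_Un_disjoint[OF fin_S] S1 S2 j_def by auto
  moreover have "k \<le> card (Q - (S1 \<union> S2))"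
  proof -
    have "Q - (S1 \<union> S2) = Q - S2" using S1 by auto
    moreover have "card Q - (m - j) \<le> card (Q - S2)"
      using diff_card_le_card_Diff[OF fin_S(2), of Q] S2 by simp
    moreover have "card (P \<union> Q) = card Q + card (P - Q)"
      using card_Un_disjoint[of Q "P - Q"] fin by (simp add: Un_commute)
    ultimately show ?thesis using card j_def by (cases "j = m") auto
  qed
  ultimately show thesis using that[of "S1 \<union> S2"] S1 S2 by auto
qed

lemma sum_bounded_above_split:
  fixes g :: "'a \<Rightarrow> nat"
  assumes "finite R" "Y \<subseteq> R" "\<And>y. y \<in> R \<Longrightarrow> g y \<le> c" "\<And>y. y \<in> Y \<Longrightarrow> g y \<le> b"
  shows "sum g R + c * card Y \<le> b * card Y + c * card R"
proof -
  have "finite Y" using assms finite_subset by blast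
  have "sum g R = sum g (R - Y) + sum g Y" using sum.subset_diff[OF assms(2,1)] .
  moreover have "sum g Y \<le> b * card Y"
    using sum_bounded_above[of Y g b] assms(4) by (simp add: mult.commute)
  moreover have "sum g (R - Y) \<le> c * card (R - Y)"
    using sum_bounded_above[of "R - Y" g c] assms(3) by (simp add: mult.commute)
  moreover have "card R = card (R - Y) + card Y"
    using card_Diff_subset[OF \<open>finite Y\<close> assms(2)] card_mono[OF assms(1,2)] by simp
  ultimately show ?thesis by (simp add: algebra_simps)
qed

section \<open>Neighbourhoods\<close>

definition nbr :: "'a set \<Rightarrow> 'a set set \<Rightarrow> 'a \<Rightarrow> 'a set" where
  "nbr V E v = {w \<in> V. {v, w} \<in> E}"

lemma simple_graph_on_edgeD:
  assumes "simple_graph_on V E" "{x, y} \<in> E"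
  shows "x \<in> V" "y \<in> V" "x \<noteq> y"
  using assms by (auto simp: simple_graph_on_def doubleton_eq_iff)

lemma finite_edges: "simple_graph_on V E \<Longrightarrow> finite E"
  unfolding simple_graph_on_def by (rule finite_subset[of _ "Pow V"]) auto

lemma nbr_subset: "nbr V E v \<subseteq> V"
  by (auto simp: nbr_def)

lemma finite_nbr: "simple_graph_on V E \<Longrightarrow> finite (nbr V E v)"
  using nbr_subset finite_subset by (metis simple_graph_on_def)

lemma nbr_iff: "simple_graph_on V E \<Longrightarrow> y \<in> nbr V E x \<longleftrightarrow> {x, y} \<in> E"
  by (auto simp: nbr_def dest: simple_graph_on_edgeD)

lemma nbr_sym: "simple_graph_on V E \<Longrightarrow> y \<in> nbr V E x \<longleftrightarrow> x \<in> nbr V E y"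
  by (simp add: nbr_iff insert_commute)

lemma not_in_nbr_self: "simple_graph_on V E \<Longrightarrow> x \<notin> nbr V E x"
  using simple_graph_on_edgeD(3)[of V E x x] by (auto simp: nbr_def)

lemma sum_card_nbr_Int_swap:
  assumes "finite A" "finite B" "A \<subseteq> V" "B \<subseteq> V"
  shows "(\<Sum>a\<in>A. card (nbr V E a \<inter> B)) = (\<Sum>b\<in>B. card (nbr V E b \<inter> A))"
proof -
  have "nbr V E a \<inter> B = {b\<in>B. {a, b} \<in> E}" for a using assms by (auto simp: nbr_def)
  moreover have "nbr V E b \<inter> A = {a\<in>A. {a, b} \<in> E}" for b
    using assms by (auto simp: nbr_def insert_commute)
  ultimately show ?thesis using sum_card_Collect_swap[OF assms(1,2)] by simp
qed

lemma card_edges_at: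
  assumes "simple_graph_on V E" "v \<in> V"
  shows "card {e\<in>E. v \<in> e} = card (nbr V E v)"
proof -
  have "{e\<in>E. v \<in> e} = (\<lambda>w. {v, w}) ` nbr V E v"
    using assms by (fastforce simp: nbr_def simple_graph_on_def insert_commute)
  moreover have "inj_on (\<lambda>w. {v, w}) (nbr V E v)"
    by (auto simp: inj_on_def doubleton_eq_iff)
  ultimately show ?thesis by (simp add: card_image)
qed

lemma sum_card_nbr:
  assumes sg: "simple_graph_on V E"
  shows "(\<Sum>v\<in>V. card (nbr V E v)) = 2 * card E"
proof -
  have "card {v\<in>V. v \<in> e} = 2" if e: "e \<in> E" for e
  proof -
    obtain a b where "e = {a, b}" "a \<in> V" "b \<in> V" "a \<noteq> b"
      using sg e by (auto simp: simple_graph_on_def)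
    then have "{v\<in>V. v \<in> e} = {a, b}" by auto
    with \<open>a \<noteq> b\<close> show ?thesis by simp
  qed
  then have "(\<Sum>e\<in>E. card {v\<in>V. v \<in> e}) = 2 * card E" by simp
  moreover have "(\<Sum>v\<in>V. card {e\<in>E. v \<in> e}) = (\<Sum>e\<in>E. card {v\<in>V. v \<in> e})"
    using sg by (intro sum_card_Collect_swap) (auto simp: simple_graph_on_def finite_edges)
  ultimately show ?thesis using card_edges_at[OF sg] by simp
qed

lemma card_nbr_Int_less:
  assumes "simple_graph_on V E" "finite M" "v \<in> M"
  shows "card (nbr V E v \<inter> M) + 1 \<le> card M"
proof -
  have "nbr V E v \<inter> M \<subseteq> M - {v}" using not_in_nbr_self[OF assms(1)] by auto
  then have "card (nbr V E v \<inter> M) \<le> card (M - {v})" using assms(2) by (intro card_mono) auto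
  moreover have "Suc (card (M - {v})) = card M"
    using card_Suc_Diff1 assms(2,3) .
  ultimately show ?thesis by linarith
qed

lemma sum_card_nbr_Int_le:
  assumes "simple_graph_on V E" "finite M"
  shows "(\<Sum>v\<in>M. card (nbr V E v \<inter> M)) + card M \<le> card M * card M"
proof -
  have "(\<Sum>v\<in>M. card (nbr V E v \<inter> M) + 1) \<le> (\<Sum>v\<in>M. card M)"
    using card_nbr_Int_less[OF assms] by (intro sum_mono) auto
  moreover have "(\<Sum>v\<in>M. card (nbr V E v \<inter> M) + 1) = (\<Sum>v\<in>M. card (nbr V E v \<inter> M)) + card M"
    by (rule trans[OF sum.distrib]) simp
  ultimately show ?thesis by simp
qed

section \<open>Copies of the tree\<close>

lemma contains_T3_imp_root_edge:
  assumes sg: "simple_graph_on V E"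
    and "contains_copy V E (T3_vertices (k + 5)) (T3_edges (k + 5))"
  obtains x w where "{x, w} \<in> E" "k + 1 \<le> card (nbr V E x)" "4 \<le> card (nbr V E w)"
    "k + 5 \<le> card (nbr V E x \<union> nbr V E w)"
proof -
  obtain f where inj: "inj_on f {0..<k+5}" and img: "f ` {0..<k+5} \<subseteq> V"
    and edges: "\<forall>e \<in> T3_edges (k+5). f ` e \<in> E"
    using assms(2) by (auto simp: contains_copy_def T3_vertices_def)
  have "{0, i} \<in> T3_edges (k+5)" if "1 \<le> i" "i \<le> k+1" for i
    using that by (auto simp: T3_edges_def)
  then have edge0: "{f 0, f i} \<in> E" if "1 \<le> i" "i \<le> k+1" for i
    using that edges by force
  have "{1, i} \<in> T3_edges (k+5)" if "k+2 \<le> i" "i \<le> k+4" for i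
    using that by (auto simp: T3_edges_def numeral_eq_Suc le_Suc_eq)
  then have edge1: "{f 1, f i} \<in> E" if "k+2 \<le> i" "i \<le> k+4" for i
    using that edges by force
  have N0: "f ` {1..k+1} \<subseteq> nbr V E (f 0)"
    using edge0 img by (auto simp: nbr_def)
  have N1: "f ` ({0} \<union> {k+2..k+4}) \<subseteq> nbr V E (f 1)"
    using edge0[of 1] edge1 img by (auto simp: nbr_def insert_commute)
  have "{0..<k+5} = ({0} \<union> {k+2..k+4}) \<union> {1..k+1}" by auto
  then have N01: "f ` {0..<k+5} \<subseteq> nbr V E (f 0) \<union> nbr V E (f 1)"
    using N0 N1 by blast
  have card_img: "card (f ` A) = card A" if "A \<subseteq> {0..<k+5}" for A
    using card_image inj_on_subset[OF inj that] by blast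
  have "card ({0} \<union> {k+2..k+4}) = 4" by (simp add: numeral_eq_Suc atLeastAtMostSuc_conv)
  then have card1: "card (f ` ({0} \<union> {k+2..k+4})) = 4" by (subst card_img) auto
  have card0: "card (f ` {1..k+1}) = k + 1" by (subst card_img) auto
  have card01: "card (f ` {0..<k+5}) = k + 5" by (subst card_img) auto
  have fin: "finite (nbr V E v)" for v using finite_nbr[OF sg] .
  show thesis
  proof (rule that)
    show "{f 0, f 1} \<in> E" using edge0[of 1] by simp
    show "k + 1 \<le> card (nbr V E (f 0))" using card_mono[OF fin N0] card0 by simp
    show "4 \<le> card (nbr V E (f 1))" using card_mono[OF fin N1] card1 by simp
    show "k + 5 \<le> card (nbr V E (f 0) \<union> nbr V E (f 1))"
      using card_mono[OF _ N01] fin card01 by simp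
  qed
qed

lemma contains_T3I:
  assumes "distinct xs" "length xs = k + 5" "set xs \<subseteq> V"
    and "\<And>i. 1 \<le> i \<Longrightarrow> i \<le> k + 1 \<Longrightarrow> {xs ! 0, xs ! i} \<in> E"
    and "\<And>i. k + 2 \<le> i \<Longrightarrow> i \<le> k + 4 \<Longrightarrow> {xs ! 1, xs ! i} \<in> E"
  shows "contains_copy V E (T3_vertices (k + 5)) (T3_edges (k + 5))"
proof -
  have "\<forall>e \<in> T3_edges (k + 5). nth xs ` e \<in> E"
    using assms(4,5) by (auto simp: T3_edges_def)
  then show ?thesis
    unfolding contains_copy_def T3_vertices_def using assms(1-3)
    by (intro exI[of _ "nth xs"]) (auto simp: inj_on_nth dest: nth_mem)
qed

lemma obtain_T3_leaves:
  assumes sg: "simple_graph_on V E" and e: "{x, w} \<in> E"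
    and dx: "k + 1 \<le> card (nbr V E x)" and dw: "4 \<le> card (nbr V E w)"
    and un: "k + 5 \<le> card (nbr V E x \<union> nbr V E w)"
  obtains L0 L1 where "L0 \<subseteq> nbr V E x - {w}" "L1 \<subseteq> nbr V E w - {x}" "L0 \<inter> L1 = {}"
    "card L0 = k" "card L1 = 3"
proof -
  let ?Q = "nbr V E x - {w}" and ?P = "nbr V E w - {x}"
  have fin: "finite (nbr V E v)" for v using finite_nbr[OF sg] .
  have "w \<in> nbr V E x" "x \<in> nbr V E w" "x \<noteq> w"
    using e nbr_iff[OF sg] nbr_sym[OF sg] simple_graph_on_edgeD[OF sg e] by auto
  moreover have "?P \<union> ?Q = (nbr V E x \<union> nbr V E w) - {x, w}"
    using not_in_nbr_self[OF sg] by auto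
  ultimately have "k + 3 \<le> card (?P \<union> ?Q)" "3 \<le> card ?P" "k \<le> card ?Q"
    using un dx dw fin by (simp_all add: card_Diff_subset)
  then obtain L1 where L1: "L1 \<subseteq> ?P" "card L1 = 3" "k \<le> card (?Q - L1)"
    using obtain_subset_with_large_Diff[of ?P ?Q 3 k] fin by auto
  moreover obtain L0 where "L0 \<subseteq> ?Q - L1" "card L0 = k"
    using obtain_subset_with_card_n L1(3) by metis
  ultimately show thesis using that[of L0 L1] by auto
qed

lemma root_edge_imp_contains_T3:
  assumes sg: "simple_graph_on V E" and e: "{x, w} \<in> E"
    and dx: "k + 1 \<le> card (nbr V E x)" and dw: "4 \<le> card (nbr V E w)"
    and un: "k + 5 \<le> card (nbr V E x \<union> nbr V E w)"
  shows "contains_copy V E (T3_vertices (k + 5)) (T3_edges (k + 5))"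
proof -
  obtain L0 L1 where L: "L0 \<subseteq> nbr V E x - {w}" "L1 \<subseteq> nbr V E w - {x}" "L0 \<inter> L1 = {}"
    "card L0 = k" "card L1 = 3"
    using obtain_T3_leaves[OF assms] .
  moreover have "finite (nbr V E v)" for v using finite_nbr[OF sg] .
  ultimately have "finite L0" "finite L1" by (meson finite_Diff finite_subset)+
  then obtain qs ss where qs: "set qs = L0" "distinct qs" and ss: "set ss = L1" "distinct ss"
    using finite_distinct_list by metis
  have len: "length qs = k" "length ss = 3"
    using qs ss L distinct_card by metis+
  define xs where "xs = x # w # qs @ ss"
  have "x \<noteq> w" using simple_graph_on_edgeD[OF sg e] by simp
  then have dist: "distinct xs"
    using qs ss L not_in_nbr_self[OF sg] by (auto simp: xs_def)
  have xs_tail: "xs ! i = (qs @ ss) ! (i - 2)" if "2 \<le> i" for i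
    using that by (simp add: xs_def nth_Cons' numeral_2_eq_2)
  have xs_nbr0: "xs ! i \<in> nbr V E x" if "1 \<le> i" "i \<le> k + 1" for i
  proof (cases "i = 1")
    case False
    then have "2 \<le> i" "i - 2 < k" using that by auto
    then have "xs ! i = qs ! (i - 2)" using len xs_tail[of i] by (simp add: nth_append)
    then show ?thesis using \<open>i - 2 < k\<close> len qs L nth_mem[of "i - 2" qs] by auto
  qed (use e nbr_iff[OF sg] in \<open>simp add: xs_def\<close>)
  have xs_nbr1: "xs ! i \<in> nbr V E w" if "k + 2 \<le> i" "i \<le> k + 4" for i
  proof -
    have "2 \<le> i" "\<not> i - 2 < k" "i - 2 - k < 3" using that by auto
    then have "xs ! i = ss ! (i - 2 - k)" using len xs_tail[of i] by (simp add: nth_append)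
    then show ?thesis using \<open>i - 2 - k < 3\<close> len ss L nth_mem[of "i - 2 - k" ss] by auto
  qed
  show ?thesis
  proof (rule contains_T3I[OF dist])
    show "length xs = k + 5" using len by (simp add: xs_def)
    show "set xs \<subseteq> V"
      using qs ss L nbr_subset simple_graph_on_edgeD[OF sg e] by (fastforce simp: xs_def)
    show "{xs ! 0, xs ! i} \<in> E" if "1 \<le> i" "i \<le> k + 1" for i
      using xs_nbr0[OF that] nbr_iff[OF sg] by (simp add: xs_def)
    show "{xs ! 1, xs ! i} \<in> E" if "k + 2 \<le> i" "i \<le> k + 4" for i
      using xs_nbr1[OF that] nbr_iff[OF sg] by (simp add: xs_def)
  qed
qed

section \<open>The upper bound\<close>

locale T3_free_graph =
  fixes V :: "'a set" and E :: "'a set set" and k :: nat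
  assumes simple: "simple_graph_on V E" and card_V: "card V = 2 * k + 1" and k_ge: "10 \<le> k"
    and T3_free: "\<not> contains_copy V E (T3_vertices (k + 5)) (T3_edges (k + 5))"
begin

abbreviation "N \<equiv> nbr V E"

lemma finite_V: "finite V"
  using simple by (simp add: simple_graph_on_def)

lemma finite_N: "finite (N v)"
  using finite_nbr[OF simple] .

lemma N_iff: "y \<in> N x \<longleftrightarrow> {x, y} \<in> E"
  using nbr_iff[OF simple] .

lemma N_sym: "y \<in> N x \<Longrightarrow> x \<in> N y"
  using nbr_sym[OF simple] by blast

lemma not_in_N_self: "x \<notin> N x"
  using not_in_nbr_self[OF simple] .

lemma card_N_Diff_add_le:
  assumes "{x, w} \<in> E" "k + 1 \<le> card (N x)" "4 \<le> card (N w)"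
  shows "card (N w - N x) + card (N x) \<le> k + 4"
proof -
  have "card (N x \<union> N w) \<le> k + 4"
    using root_edge_imp_contains_T3[OF simple assms] T3_free by linarith
  moreover have "card (N x \<union> N w) = card (N x) + card (N w - N x)"
    using card_Un_disjoint[of "N x" "N w - N x"] finite_N by simp
  ultimately show ?thesis by simp
qed

lemma card_N_split:
  assumes "N v \<subseteq> A \<union> B" "A \<inter> B = {}"
  shows "card (N v) = card (N v \<inter> A) + card (N v \<inter> B)"
proof -
  have "N v = (N v \<inter> A) \<union> (N v \<inter> B)" using assms by auto
  then show ?thesis
    using card_Un_disjoint[of "N v \<inter> A" "N v \<inter> B"] finite_N assms(2) by auto
qed

end

locale T3_free_graph_max_vertex = T3_free_graph +
  fixes u
  assumes u_in_V: "u \<in> V" and max_degree: "\<And>v. v \<in> V \<Longrightarrow> card (N v) \<le> card (N u)"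
begin

abbreviation "A \<equiv> N u"
abbreviation "R \<equiv> V - N u - {u}"

lemma A_subset: "A \<subseteq> V"
  by (rule nbr_subset)

lemma finite_R: "finite R"
  using finite_V by auto

lemma degree_le_card_A: "w \<in> A \<union> R \<Longrightarrow> card (N w) \<le> card A"
  using max_degree A_subset by blast

lemma V_eq: "V = insert u (A \<union> R)"
  using A_subset u_in_V by auto

lemma finite_A_Un_R: "finite (A \<union> R)"
  using finite_N finite_R by simp

lemma u_notin_A_Un_R: "u \<notin> A \<union> R"
  using not_in_N_self by simp

lemma card_R_add_card_A: "card R + card A = 2 * k"
proof -
  have "card (A \<union> R) = card A + card R"
    using finite_N finite_R by (intro card_Un_disjoint) auto
  moreover have "card V = Suc (card (A \<union> R))"
    using arg_cong[OF V_eq, of card] card_insert_disjoint[OF finite_A_Un_R u_notin_A_Un_R] by simp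
  ultimately show ?thesis using card_V by simp
qed

lemma u_in_N_of_A: "w \<in> A \<Longrightarrow> u \<in> N w"
  by (rule N_sym)

lemma card_N_of_R: "y \<in> R \<Longrightarrow> card (N y) = card (N y \<inter> R) + card (N y \<inter> A)"
  by (rule card_N_split) (use nbr_subset[of V E y] N_sym in auto)

lemma card_N_of_A:
  assumes "w \<in> A" shows "card (N w) = Suc (card (N w \<inter> A) + card (N w \<inter> R))"
proof -
  have "N w = insert u ((N w \<inter> A) \<union> (N w \<inter> R))"
    using nbr_subset[of V E w] u_in_N_of_A[OF assms] by auto
  then have "card (N w) = card (insert u ((N w \<inter> A) \<union> (N w \<inter> R)))"
    by (rule arg_cong)
  also have "\<dots> = Suc (card (N w \<inter> A) + card (N w \<inter> R))"
    using finite_N not_in_N_self card_Un_disjoint[of "N w \<inter> A" "N w \<inter> R"] by auto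
  finally show ?thesis .
qed

lemma sum_card_N_eq:
  "(\<Sum>v\<in>V. card (N v)) =
     card A + (\<Sum>w\<in>A. card (N w) + card (N w \<inter> R)) + (\<Sum>y\<in>R. card (N y \<inter> R))"
proof -
  have "(\<Sum>v\<in>V. card (N v)) = card A + (\<Sum>v\<in>A \<union> R. card (N v))"
    using arg_cong[OF V_eq, of "sum (\<lambda>v. card (N v))"] sum.insert[OF finite_A_Un_R u_notin_A_Un_R]
    by simp
  also have "(\<Sum>v\<in>A \<union> R. card (N v)) = (\<Sum>v\<in>A. card (N v)) + (\<Sum>v\<in>R. card (N v))"
    using finite_N finite_R by (intro sum.union_disjoint) auto
  finally have "(\<Sum>v\<in>V. card (N v)) = card A + (\<Sum>v\<in>A. card (N v)) + (\<Sum>v\<in>R. card (N v))"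
    by simp
  moreover have "(\<Sum>v\<in>R. card (N v)) = (\<Sum>y\<in>R. card (N y \<inter> R)) + (\<Sum>y\<in>R. card (N y \<inter> A))"
    using card_N_of_R by (simp add: sum.distrib)
  moreover have "(\<Sum>y\<in>R. card (N y \<inter> A)) = (\<Sum>w\<in>A. card (N w \<inter> R))"
    by (rule sum_card_nbr_Int_swap) (use finite_R finite_N A_subset in auto)
  ultimately show ?thesis by (simp add: sum.distrib)
qed

lemma sum_card_N_Int_R_le: "(\<Sum>y\<in>R. card (N y \<inter> R)) + card R \<le> card R * card R"
  using sum_card_nbr_Int_le[OF simple finite_R] .

lemma sum_card_N_Int_R_le_except:
  assumes "Y \<subseteq> R" "\<And>y. y \<in> Y \<Longrightarrow> card (N y \<inter> R) + 1 \<le> b"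
  shows "(\<Sum>y\<in>R. card (N y \<inter> R)) + card R + card R * card Y \<le> b * card Y + card R * card R"
proof -
  have "(\<Sum>y\<in>R. card (N y \<inter> R) + 1) + card R * card Y \<le> b * card Y + card R * card R"
    using assms card_nbr_Int_less[OF simple finite_R]
    by (intro sum_bounded_above_split[OF finite_R]) auto
  moreover have "(\<Sum>y\<in>R. card (N y \<inter> R) + 1) = (\<Sum>y\<in>R. card (N y \<inter> R)) + card R"
    by (rule trans[OF sum.distrib]) simp
  ultimately show ?thesis by simp
qed

lemma card_N_Int_R_of_high_degree:
  assumes "w \<in> A" "k + 1 \<le> card A" "4 \<le> card (N w)"
  shows "card (N w \<inter> R) + card A \<le> k + 3"
proof -
  have "{u, w} \<in> E" using N_iff assms(1) by auto
  then have "card (N w - A) + card A \<le> k + 4" using card_N_Diff_add_le assms by auto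
  moreover have "insert u (N w \<inter> R) \<subseteq> N w - A"
    using u_in_N_of_A[OF assms(1)] not_in_N_self by auto
  then have "card (insert u (N w \<inter> R)) \<le> card (N w - A)"
    using finite_N by (intro card_mono) auto
  ultimately show ?thesis using finite_N by simp
qed

lemma card_N_Int_R_of_low_degree:
  assumes "w \<in> A" "card (N w) \<le> 3"
  shows "card (N w \<inter> R) \<le> 2"
  using card_N_of_A[OF assms(1)] assms(2) by simp

lemma card_N_Int_R_of_nbr:
  assumes x: "x \<notin> R" "{x, y} \<in> E" "k + 1 \<le> card (N x)" "card (N x \<inter> R) \<le> 2" and y: "y \<in> R"
  shows "card (N y \<inter> R) \<le> 3"
proof (cases "card (N y) \<le> 3")
  case True
  then show ?thesis using card_mono[OF finite_N, of "N y \<inter> R" y] by auto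
next
  case False
  then have "card (N y - N x) + card (N x) \<le> k + 4" using card_N_Diff_add_le x by auto
  then have "card (N y - N x - {x}) \<le> 2"
    using x N_iff not_in_N_self N_sym finite_N by (simp add: card_Diff_singleton)
  moreover have "card (N x \<inter> R - {y}) \<le> 1"
    using x y N_iff finite_N by (simp add: card_Diff_singleton)
  moreover have "N y \<inter> R \<subseteq> (N y - N x - {x}) \<union> (N x \<inter> R - {y})"
    using x(1) not_in_N_self by auto
  then have "card (N y \<inter> R) \<le> card (N y - N x - {x}) + card (N x \<inter> R - {y})"
    using finite_N card_Un_le by (meson card_mono finite_Diff finite_Int finite_UnI order_trans)
  ultimately show ?thesis by simp
qed

lemma sum_card_N_le_of_degree_le:
  assumes "card A \<le> k"
  shows "(\<Sum>v\<in>V. card (N v)) \<le> 2 * k * k + k"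
  using sum_bounded_above[of V "\<lambda>v. card (N v)" k] max_degree assms card_V
  by (fastforce simp: algebra_simps)

lemma sum_card_N_le_of_degree_ge:
  assumes big: "k + 4 \<le> card A"
  shows "(\<Sum>v\<in>V. card (N v)) \<le> 2 * k * k + k"
proof -
  have low: "card (N w) \<le> 3" if "w \<in> A" for w
  proof (rule ccontr)
    assume "\<not> card (N w) \<le> 3"
    then have "card (N w \<inter> R) + card A \<le> k + 3"
      using card_N_Int_R_of_high_degree[OF that] big by simp
    then show False using big by simp
  qed
  have sum_A: "(\<Sum>w\<in>A. card (N w) + card (N w \<inter> R)) \<le> (\<Sum>w\<in>A. 5)"
  proof (rule sum_mono)
    fix w assume "w \<in> A"
    then show "card (N w) + card (N w \<inter> R) \<le> 5"
      using low card_N_Int_R_of_low_degree by fastforce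
  qed
  have "card A \<le> 2 * k" and "card R \<le> k - 4" using card_R_add_card_A big by auto
  then have "card R * card R \<le> (k - 4) * (k - 4)" by (simp add: mult_le_mono)
  then have "(\<Sum>v\<in>V. card (N v)) \<le> 12 * k + (k - 4) * (k - 4)"
    using sum_A \<open>card A \<le> 2 * k\<close> sum_card_N_eq sum_card_N_Int_R_le by simp
  also have "\<dots> \<le> 2 * k * k + k"
  proof -
    define j where "j = k - 4"
    then have j: "k = j + 4" "6 \<le> j" using k_ge by auto
    then have "6 * j \<le> j * j" by simp
    then show ?thesis using j by (simp add: algebra_simps)
  qed
  finally show ?thesis .
qed

lemma sum_card_N_le_of_degree_k3:
  assumes card_A: "card A = k + 3"
  shows "(\<Sum>v\<in>V. card (N v)) \<le> 2 * k * k + 24"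
proof -
  have "card (N w) + card (N w \<inter> R) \<le> k + 3" if w: "w \<in> A" for w
  proof (cases "4 \<le> card (N w)")
    case True
    then show ?thesis
      using card_N_Int_R_of_high_degree[OF w] degree_le_card_A w card_A by fastforce
  next
    case False
    then show ?thesis using card_N_Int_R_of_low_degree[OF w] k_ge by simp
  qed
  then have sum_A: "(\<Sum>w\<in>A. card (N w) + card (N w \<inter> R)) \<le> (k + 3) * (k + 3)"
    using sum_bounded_above[of A _ "k + 3"] card_A by simp
  define r where "r = card R"
  have "k = r + 3" using card_R_add_card_A card_A r_def by simp
  then have "r * r + 6 * k = k * k + 9" "(k + 3) * (k + 3) = k * k + 6 * k + 9"
    by (simp_all add: algebra_simps)
  moreover have "(\<Sum>y\<in>R. card (N y \<inter> R)) + r \<le> r * r"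
    using sum_card_N_Int_R_le r_def by simp
  ultimately have "(\<Sum>v\<in>V. card (N v)) \<le> 2 * (k * k) + 24"
    using sum_card_N_eq sum_A card_A \<open>k = r + 3\<close> by linarith
  then show ?thesis by (simp add: algebra_simps)
qed

lemma card_N_Int_R_of_degree_k2:
  assumes "card A = k + 2" "w \<in> A"
  shows "card (N w \<inter> R) \<le> 2" and "4 \<le> card (N w) \<Longrightarrow> card (N w \<inter> R) \<le> 1"
proof -
  show high: "card (N w \<inter> R) \<le> 1" if "4 \<le> card (N w)"
    using card_N_Int_R_of_high_degree[OF assms(2) _ that] assms(1) by simp
  show "card (N w \<inter> R) \<le> 2"
    using high card_N_Int_R_of_low_degree[OF assms(2)] by (cases "4 \<le> card (N w)") auto
qed

lemma sum_card_N_le_of_degree_k2_nbr_R: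
  assumes card_A: "card A = k + 2" and w0: "w0 \<in> A" "card (N w0) = k + 2" and y0: "y0 \<in> N w0 \<inter> R"
  shows "(\<Sum>v\<in>V. card (N v)) \<le> 2 * k * k + 20"
proof -
  have "k = card R + 2" using card_R_add_card_A card_A by simp
  then have sq: "card R * card R + 4 * k = k * k + 4" by (simp add: algebra_simps)
  have "card (N y0 \<inter> R) \<le> 3"
    using card_N_Int_R_of_nbr[of w0 y0] card_N_Int_R_of_degree_k2[OF card_A w0(1)] w0 y0 k_ge N_iff
    by force
  then have sum_R: "(\<Sum>y\<in>R. card (N y \<inter> R)) + 2 * card R \<le> 4 + card R * card R"
    using sum_card_N_Int_R_le_except[of "{y0}" 4] y0 by simp
  have "card (N w) + card (N w \<inter> R) \<le> k + 3" if w: "w \<in> A" for w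
    using card_N_Int_R_of_degree_k2[OF card_A w] degree_le_card_A[of w] w card_A k_ge
    by (cases "4 \<le> card (N w)") auto
  then have "(\<Sum>w\<in>A. card (N w) + card (N w \<inter> R)) \<le> (k + 2) * (k + 3)"
    using sum_bounded_above[of A _ "k + 3"] card_A by simp
  moreover have "(k + 2) * (k + 3) = k * k + 5 * k + 6" by (simp add: algebra_simps)
  ultimately have "(\<Sum>v\<in>V. card (N v)) \<le> 2 * (k * k) + 20"
    using sum_card_N_eq sum_R sq card_A \<open>k = card R + 2\<close> by linarith
  then show ?thesis by (simp add: algebra_simps)
qed

lemma sum_card_N_le_of_degree_k2_no_nbr_R:
  assumes card_A: "card A = k + 2" and no_nbr: "\<And>w. w \<in> A \<Longrightarrow> card (N w) = k + 2 \<Longrightarrow> N w \<inter> R = {}"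
  shows "(\<Sum>v\<in>V. card (N v)) \<le> 2 * k * k + 20"
proof -
  have "k = card R + 2" using card_R_add_card_A card_A by simp
  then have sq: "card R * card R + 4 * k = k * k + 4" by (simp add: algebra_simps)
  have "card (N w) + card (N w \<inter> R) \<le> k + 2" if w: "w \<in> A" for w
  proof (cases "4 \<le> card (N w)")
    case True
    then show ?thesis
      using no_nbr[OF w] card_N_Int_R_of_degree_k2[OF card_A w] degree_le_card_A[of w] w card_A
      by (cases "card (N w) = k + 2") auto
  next
    case False
    then show ?thesis using card_N_Int_R_of_degree_k2[OF card_A w] k_ge by simp
  qed
  then have "(\<Sum>w\<in>A. card (N w) + card (N w \<inter> R)) \<le> (k + 2) * (k + 2)"
    using sum_bounded_above[of A _ "k + 2"] card_A by simp
  moreover have "(k + 2) * (k + 2) = k * k + 4 * k + 4" by (simp add: algebra_simps)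
  ultimately have "(\<Sum>v\<in>V. card (N v)) \<le> 2 * (k * k) + 20"
    using sum_card_N_eq sum_card_N_Int_R_le sq card_A \<open>k = card R + 2\<close> by linarith
  then show ?thesis by (simp add: algebra_simps)
qed

lemma sum_card_N_le_of_degree_k2:
  assumes "card A = k + 2"
  shows "(\<Sum>v\<in>V. card (N v)) \<le> 2 * k * k + 20"
  using sum_card_N_le_of_degree_k2_nbr_R[OF assms] sum_card_N_le_of_degree_k2_no_nbr_R[OF assms]
  by blast

end

locale T3_free_graph_max_degree_k1 = T3_free_graph_max_vertex +
  assumes card_A: "card (nbr V E u) = k + 1"
begin

definition R_adj_max :: "'a set" where
  "R_adj_max = {y \<in> R. \<exists>w\<in>A. card (N w) = k + 1 \<and> {w, y} \<in> E}"

definition deficient :: "'a set" where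
  "deficient = {w \<in> A. card (N w) + card (N w \<inter> R) \<le> k + 1}"

lemma k_eq: "k = card R + 1"
  using card_R_add_card_A card_A by simp

lemma k_sq: "card R * card R + 2 * k = k * k + 1"
  using k_eq by (simp add: algebra_simps)

lemma degree_of_A_le: "w \<in> A \<Longrightarrow> card (N w) \<le> k + 1"
  using degree_le_card_A card_A by auto

lemma card_N_Int_R_of_A: "w \<in> A \<Longrightarrow> card (N w \<inter> R) \<le> 2"
  using card_N_Int_R_of_high_degree[of w] card_N_Int_R_of_low_degree[of w] card_A
  by (cases "4 \<le> card (N w)") auto

lemma card_N_Int_R_of_R_adj_max:
  assumes "y \<in> R_adj_max" shows "card (N y \<inter> R) \<le> 3"
proof -
  obtain w where "y \<in> R" "w \<in> A" "card (N w) = k + 1" "{w, y} \<in> E"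
    using assms by (auto simp: R_adj_max_def)
  then show ?thesis using card_N_Int_R_of_nbr[of w y] card_N_Int_R_of_A[of w] by simp
qed

lemma finite_deficient: "finite deficient"
  using finite_N by (simp add: deficient_def)

lemma R_adj_max_subset: "R_adj_max \<subseteq> R"
  by (auto simp: R_adj_max_def)

lemma sum_card_N_le_of_two_R_adj_max:
  assumes "y1 \<in> R_adj_max" "y2 \<in> R_adj_max" "y1 \<noteq> y2"
  shows "(\<Sum>v\<in>V. card (N v)) \<le> 2 * k * k + 16"
proof -
  have "card (N w) + card (N w \<inter> R) \<le> k + 3" if "w \<in> A" for w
    using degree_of_A_le[OF that] card_N_Int_R_of_A[OF that] by simp
  then have sum_A: "(\<Sum>w\<in>A. card (N w) + card (N w \<inter> R)) \<le> (k + 1) * (k + 3)"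
    using sum_bounded_above[of A _ "k + 3"] card_A by simp
  have "(\<Sum>y\<in>R. card (N y \<inter> R)) + card R + card R * card {y1, y2} \<le> 4 * card {y1, y2} + card R * card R"
    using assms R_adj_max_subset card_N_Int_R_of_R_adj_max
    by (intro sum_card_N_Int_R_le_except) fastforce+
  then have sum_R: "(\<Sum>y\<in>R. card (N y \<inter> R)) + 3 * card R \<le> 8 + card R * card R"
    using assms by simp
  have "(k + 1) * (k + 3) = k * k + 4 * k + 3" by (simp add: algebra_simps)
  then have "(\<Sum>v\<in>V. card (N v)) \<le> 2 * (k * k) + 16"
    using sum_card_N_eq sum_A sum_R card_A k_sq k_eq by linarith
  then show ?thesis by (simp add: algebra_simps)
qed

lemma sum_card_N_le_of_R_adj_max_eq:
  assumes Y: "R_adj_max = {y0}"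
  shows "(\<Sum>v\<in>V. card (N v)) \<le> 2 * k * k + 16"
proof -
  have "card (N w) + card (N w \<inter> R) \<le> k + 2" if w: "w \<in> A" for w
  proof (cases "card (N w) = k + 1")
    case True
    then have "N w \<inter> R \<subseteq> {y0}" using Y w N_iff by (auto simp: R_adj_max_def)
    then have "card (N w \<inter> R) \<le> 1" using card_mono[of "{y0}"] by fastforce
    then show ?thesis using True by simp
  next
    case False
    then show ?thesis using degree_of_A_le[OF w] card_N_Int_R_of_A[OF w] by simp
  qed
  then have sum_A: "(\<Sum>w\<in>A. card (N w) + card (N w \<inter> R)) \<le> (k + 1) * (k + 2)"
    using sum_bounded_above[of A _ "k + 2"] card_A by simp
  have "(\<Sum>y\<in>R. card (N y \<inter> R)) + card R + card R * card {y0} \<le> 4 * card {y0} + card R * card R"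
    using Y R_adj_max_subset card_N_Int_R_of_R_adj_max
    by (intro sum_card_N_Int_R_le_except) fastforce+
  then have sum_R: "(\<Sum>y\<in>R. card (N y \<inter> R)) + 2 * card R \<le> 4 + card R * card R"
    by simp
  have "(k + 1) * (k + 2) = k * k + 3 * k + 2" by (simp add: algebra_simps)
  then have "(\<Sum>v\<in>V. card (N v)) \<le> 2 * (k * k) + 16"
    using sum_card_N_eq sum_A sum_R card_A k_sq k_eq by linarith
  then show ?thesis by (simp add: algebra_simps)
qed

lemma N_Int_R_empty:
  assumes "R_adj_max = {}" "w \<in> A" "card (N w) = k + 1"
  shows "N w \<inter> R = {}"
  using assms N_iff by (auto simp: R_adj_max_def)

lemma sum_card_N_A_le_of_R_adj_max_empty:
  assumes "R_adj_max = {}"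
  shows "(\<Sum>w\<in>A. card (N w) + card (N w \<inter> R)) + card deficient \<le> (k + 1) * (k + 2)"
proof -
  have "card (N w) + card (N w \<inter> R) \<le> k + 2" if w: "w \<in> A" for w
    using N_Int_R_empty[OF assms w] degree_of_A_le[OF w] card_N_Int_R_of_A[OF w]
    by (cases "card (N w) = k + 1") auto
  then have "(\<Sum>w\<in>A. card (N w) + card (N w \<inter> R)) + (k + 2) * card deficient
      \<le> (k + 1) * card deficient + (k + 2) * card A"
    by (intro sum_bounded_above_split) (auto simp: deficient_def finite_N)
  then show ?thesis using card_A by (simp add: algebra_simps)
qed

lemma sum_card_N_le_of_R_not_clique:
  assumes "R_adj_max = {}" and y: "y1 \<in> R" "y2 \<in> R" "y1 \<noteq> y2" "{y1, y2} \<notin> E"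
  shows "(\<Sum>v\<in>V. card (N v)) \<le> 2 * k * k + k + 3"
proof -
  have "2 \<le> card R"
    using y finite_R card_mono[of R "{y1, y2}"] by simp
  have "card (N y \<inter> R) + 1 \<le> card R - 1" if "y \<in> {y1, y2}" for y
  proof -
    have "N y \<inter> R \<subseteq> R - {y1, y2}" using that y not_in_N_self N_iff by (auto simp: insert_commute)
    then have "card (N y \<inter> R) \<le> card (R - {y1, y2})" using finite_R by (intro card_mono) auto
    moreover have "card (R - {y1, y2}) + 2 = card R"
      using y finite_R \<open>2 \<le> card R\<close> by (simp add: card_Diff_subset)
    ultimately show ?thesis by simp
  qed
  then have "(\<Sum>y\<in>R. card (N y \<inter> R)) + card R + card R * card {y1, y2} \<le> (card R - 1) * card {y1, y2} + card R * card R"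
    using y by (intro sum_card_N_Int_R_le_except) auto
  then have sum_R: "(\<Sum>y\<in>R. card (N y \<inter> R)) + card R + 2 \<le> card R * card R"
    using y \<open>2 \<le> card R\<close> by (simp add: algebra_simps)
  have "(k + 1) * (k + 2) = k * k + 3 * k + 2" by (simp add: algebra_simps)
  then have "(\<Sum>v\<in>V. card (N v)) \<le> 2 * (k * k) + k + 3"
    using sum_card_N_eq sum_card_N_A_le_of_R_adj_max_empty[OF assms(1)] sum_R card_A k_sq k_eq
    by linarith
  then show ?thesis by (simp add: algebra_simps)
qed

lemma sum_card_N_le_of_two_deficient:
  assumes "R_adj_max = {}" "2 \<le> card deficient"
  shows "(\<Sum>v\<in>V. card (N v)) \<le> 2 * k * k + k + 3"
proof -
  have "(k + 1) * (k + 2) = k * k + 3 * k + 2" by (simp add: algebra_simps)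
  then have "(\<Sum>v\<in>V. card (N v)) \<le> 2 * (k * k) + k + 3"
    using sum_card_N_eq sum_card_N_A_le_of_R_adj_max_empty[OF assms(1)] assms(2)
      sum_card_N_Int_R_le card_A k_sq k_eq
    by linarith
  then show ?thesis by (simp add: algebra_simps)
qed

lemma degree_of_non_deficient:
  assumes "R_adj_max = {}" "w \<in> A - deficient"
  shows "card (N w) = k" "card (N w \<inter> R) = 2"
proof -
  have w: "w \<in> A" "k + 2 \<le> card (N w) + card (N w \<inter> R)"
    using assms(2) by (auto simp: deficient_def)
  have "card (N w) \<noteq> k + 1"
  proof
    assume "card (N w) = k + 1"
    then show False using N_Int_R_empty[OF assms(1) w(1)] w(2) by simp
  qed
  then show "card (N w) = k" "card (N w \<inter> R) = 2"
    using w degree_of_A_le[OF w(1)] card_N_Int_R_of_A[OF w(1)] by simp_all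
qed

lemma obtain_R_vertex_with_three_nbrs_in_A:
  assumes Y: "R_adj_max = {}" and clique: "\<And>y1 y2. y1 \<in> R \<Longrightarrow> y2 \<in> R \<Longrightarrow> y1 \<noteq> y2 \<Longrightarrow> {y1, y2} \<in> E"
    and D: "card deficient \<le> 1"
  obtains y where "y \<in> R" "card (N y \<inter> A) = 3" "card (N y) = k + 1"
proof -
  have "k \<le> card (A - deficient)"
    using D card_A diff_card_le_card_Diff[OF finite_deficient, of A] by linarith
  moreover have "(\<Sum>w\<in>A - deficient. card (N w \<inter> R)) = 2 * card (A - deficient)"
    using degree_of_non_deficient[OF Y] by simp
  moreover have "(\<Sum>w\<in>A - deficient. card (N w \<inter> R)) \<le> (\<Sum>w\<in>A. card (N w \<inter> R))"
    using finite_N by (intro sum_mono2) auto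
  moreover have "(\<Sum>w\<in>A. card (N w \<inter> R)) = (\<Sum>y\<in>R. card (N y \<inter> A))"
    using sum_card_nbr_Int_swap[OF finite_N finite_R A_subset] by blast
  ultimately have sum_R: "2 * k \<le> (\<Sum>y\<in>R. card (N y \<inter> A))" by linarith
  have "\<exists>y\<in>R. 2 < card (N y \<inter> A)"
  proof (rule ccontr)
    assume "\<not> ?thesis"
    then have "card (N y \<inter> A) \<le> 2" if "y \<in> R" for y using that by (meson not_less)
    then have "(\<Sum>y\<in>R. card (N y \<inter> A)) \<le> (\<Sum>y\<in>R. 2)" by (intro sum_mono) simp
    then show False using sum_R k_eq by simp
  qed
  then obtain y where y: "y \<in> R" "2 < card (N y \<inter> A)" by blast
  have "N y \<inter> R = R - {y}" using clique y not_in_N_self N_iff by auto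
  then have "card (N y \<inter> R) + 2 = k" using card_Suc_Diff1[OF finite_R y(1)] k_eq by simp
  moreover have "card (N y) \<le> k + 1" using degree_le_card_A y card_A by auto
  ultimately show thesis using that[OF y(1)] y card_N_of_R[OF y(1)] by simp
qed

lemma two_deficient_of_R_clique:
  assumes Y: "R_adj_max = {}" and clique: "\<And>y1 y2. y1 \<in> R \<Longrightarrow> y2 \<in> R \<Longrightarrow> y1 \<noteq> y2 \<Longrightarrow> {y1, y2} \<in> E"
  shows "2 \<le> card deficient"
proof (rule ccontr)
  txt \<open>Some \<open>y \<in> R\<close> has three neighbours in \<open>A\<close>, one of them a vertex \<open>w\<close> that is not deficient.
    Then \<open>w\<close> has degree \<open>k\<close> and \<open>k - 3\<close> neighbours in \<open>A\<close>, at most two of them in \<open>N(y)\<close>; with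
    \<open>u\<close> and \<open>y\<close> this leaves more than three vertices in \<open>N(w) - N(y)\<close>, although \<open>d(y) = k + 1\<close>.\<close>
  assume "\<not> 2 \<le> card deficient"
  then have D: "card deficient \<le> 1" by simp
  then obtain y where y: "y \<in> R" "card (N y \<inter> A) = 3" "card (N y) = k + 1"
    using obtain_R_vertex_with_three_nbrs_in_A[OF Y clique] by blast
  have "card (N y \<inter> A) \<le> card (N y \<inter> A - deficient) + 1"
    using D diff_card_le_card_Diff[OF finite_deficient, of "N y \<inter> A"] by linarith
  then have "0 < card (N y \<inter> A - deficient)" using y(2) by simp
  then obtain w where w: "w \<in> N y \<inter> A - deficient" by (metis card.empty less_irrefl ex_in_conv)
  have deg_w: "card (N w) = k" "card (N w \<inter> R) = 2"
    using degree_of_non_deficient[OF Y] w by auto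
  define S where "S = N w \<inter> A - N y"
  have "card (N w \<inter> A \<inter> N y) \<le> 2"
  proof -
    have "N w \<inter> A \<inter> N y \<subseteq> N y \<inter> A - {w}" using not_in_N_self by auto
    then have "card (N w \<inter> A \<inter> N y) \<le> card (N y \<inter> A - {w})" using finite_N by (intro card_mono) auto
    then show ?thesis using y w finite_N by simp
  qed
  moreover have "card (N w \<inter> A) = k - 3" using card_N_of_A[of w] w deg_w by simp
  ultimately have "k - 5 \<le> card S"
    using card_Diff_subset_Int[of "N w \<inter> A" "N y"] finite_N by (simp add: S_def)
  moreover have "card (insert u (insert y S)) = card S + 2"
  proof -
    have "u \<notin> insert y S" "y \<notin> S" using y(1) not_in_N_self[of u] by (auto simp: S_def)
    then show ?thesis using finite_N by (simp add: S_def)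
  qed
  moreover have "insert u (insert y S) \<subseteq> N w - N y"
    using u_in_N_of_A w y N_sym not_in_N_self by (auto simp: S_def)
  then have "card (insert u (insert y S)) \<le> card (N w - N y)"
    using finite_N by (intro card_mono) auto
  moreover have "card (N w - N y) + card (N y) \<le> k + 4"
    using card_N_Diff_add_le[of y w] w y deg_w k_ge N_iff by simp
  ultimately show False using y(3) k_ge by simp
qed

lemma sum_card_N_le_of_degree_k1: "(\<Sum>v\<in>V. card (N v)) \<le> 2 * k * k + max (k + 3) 16"
proof (cases "R_adj_max = {}")
  case True
  show ?thesis
  proof (cases "\<forall>y1\<in>R. \<forall>y2\<in>R. y1 \<noteq> y2 \<longrightarrow> {y1, y2} \<in> E")
    case True
    then have "2 \<le> card deficient" using two_deficient_of_R_clique[OF \<open>R_adj_max = {}\<close>] by blast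
    then show ?thesis using sum_card_N_le_of_two_deficient[OF \<open>R_adj_max = {}\<close>] by simp
  next
    case False
    then show ?thesis using sum_card_N_le_of_R_not_clique[OF \<open>R_adj_max = {}\<close>] by fastforce
  qed
next
  case False
  then obtain y0 where "y0 \<in> R_adj_max" by blast
  then consider "R_adj_max = {y0}" | y1 where "y1 \<in> R_adj_max" "y1 \<noteq> y0" by blast
  then show ?thesis
    using sum_card_N_le_of_R_adj_max_eq sum_card_N_le_of_two_R_adj_max \<open>y0 \<in> R_adj_max\<close>
    by cases fastforce+
qed

end

context T3_free_graph begin

lemma sum_card_N_le: "(\<Sum>v\<in>V. card (N v)) \<le> 2 * k * k + max (k + 3) 24"
proof -
  define m where "m = Max ((\<lambda>v. card (N v)) ` V)"
  have "V \<noteq> {}" using card_V by auto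
  then have "m \<in> (\<lambda>v. card (N v)) ` V" unfolding m_def using finite_V by (intro Max_in) auto
  then obtain u where "u \<in> V" "card (N u) = m" by auto
  then interpret T3_free_graph_max_vertex V E k u
    using finite_V by unfold_locales (auto simp: m_def)
  consider "card A \<le> k" | "card A = k + 1" | "card A = k + 2" | "card A = k + 3" | "k + 4 \<le> card A"
    by linarith
  then show ?thesis
  proof cases
    case 2
    then interpret T3_free_graph_max_degree_k1 V E k u by unfold_locales
    show ?thesis using sum_card_N_le_of_degree_k1 by simp
  qed (use sum_card_N_le_of_degree_le sum_card_N_le_of_degree_k2 sum_card_N_le_of_degree_k3
         sum_card_N_le_of_degree_ge in fastforce)+
qed

lemma card_edges_le: "card E \<le> k * k + max ((k + 3) div 2) 12"
proof -
  have "2 * card E \<le> 2 * k * k + max (k + 3) 24"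
    using sum_card_N_le sum_card_nbr[OF simple] by simp
  then show ?thesis by linarith
qed

end

section \<open>Extremal graphs\<close>

definition rel_edges :: "nat \<Rightarrow> (nat \<Rightarrow> nat \<Rightarrow> bool) \<Rightarrow> nat set set" where
  "rel_edges p P = {{x, y} | x y. x < p \<and> y < p \<and> x \<noteq> y \<and> P x y}"

lemma simple_graph_on_rel_edges: "simple_graph_on {0..<p} (rel_edges p P)"
  unfolding simple_graph_on_def rel_edges_def by auto

lemma nbr_rel_edges:
  assumes sym: "\<And>x y. P x y = P y x" and x: "x < p"
  shows "nbr {0..<p} (rel_edges p P) x = {y. y < p \<and> y \<noteq> x \<and> P x y}"
proof -
  have "{x, y} \<in> rel_edges p P \<longleftrightarrow> y < p \<and> y \<noteq> x \<and> P x y" for y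
    using x sym by (auto simp: rel_edges_def doubleton_eq_iff)
  then show ?thesis unfolding nbr_def by auto
qed

definition two_cliques :: "nat \<Rightarrow> nat \<Rightarrow> nat \<Rightarrow> bool" where
  "two_cliques k x y \<longleftrightarrow> (x < k + 4 \<longleftrightarrow> y < k + 4)"

lemma nbr_two_cliques:
  assumes "x < 2 * k + 1" "4 \<le> k"
  shows "nbr {0..<2*k+1} (rel_edges (2*k+1) (two_cliques k)) x =
    (if x < k + 4 then {0..<k+4} else {k+4..<2*k+1}) - {x}"
  using assms by (subst nbr_rel_edges) (auto simp: two_cliques_def)

lemma two_cliques_T3_free:
  assumes "4 \<le> k"
  shows "\<not> contains_copy {0..<2*k+1} (rel_edges (2*k+1) (two_cliques k)) (T3_vertices (k+5)) (T3_edges (k+5))"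
proof
  let ?V = "{0..<2*k+1}" and ?E = "rel_edges (2*k+1) (two_cliques k)"
  assume "contains_copy ?V ?E (T3_vertices (k+5)) (T3_edges (k+5))"
  then obtain x w where xw: "{x, w} \<in> ?E" "k + 5 \<le> card (nbr ?V ?E x \<union> nbr ?V ?E w)"
    using contains_T3_imp_root_edge[OF simple_graph_on_rel_edges] by metis
  have xw_V: "x < 2*k+1" "w < 2*k+1"
    using simple_graph_on_edgeD[OF simple_graph_on_rel_edges xw(1)] by auto
  moreover have "w \<in> nbr ?V ?E x"
    using nbr_iff[OF simple_graph_on_rel_edges] xw(1) by blast
  ultimately have "x < k + 4 \<longleftrightarrow> w < k + 4"
    using nbr_two_cliques assms by (auto split: if_splits)
  then have "nbr ?V ?E x \<union> nbr ?V ?E w \<subseteq> (if x < k + 4 then {0..<k+4} else {k+4..<2*k+1})"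
    using nbr_two_cliques xw_V assms by auto
  then have "card (nbr ?V ?E x \<union> nbr ?V ?E w) \<le> card (if x < k + 4 then {0..<k+4} else {k+4..<2*k+1})"
    by (intro card_mono) auto
  then have "card (nbr ?V ?E x \<union> nbr ?V ?E w) \<le> k + 4"
    by (simp split: if_splits)
  then show False using xw by simp
qed

lemma card_two_cliques:
  assumes "4 \<le> k"
  shows "card (rel_edges (2*k+1) (two_cliques k)) = k * k + 12"
proof -
  let ?V = "{0..<2*k+1}" and ?E = "rel_edges (2*k+1) (two_cliques k)"
  have "?V = {0..<k+4} \<union> {k+4..<2*k+1}" using assms by auto
  then have "(\<Sum>v\<in>?V. card (nbr ?V ?E v)) =
      (\<Sum>v\<in>{0..<k+4}. card (nbr ?V ?E v)) + (\<Sum>v\<in>{k+4..<2*k+1}. card (nbr ?V ?E v))"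
    by (simp add: sum.union_disjoint)
  also have "\<dots> = (k + 4) * (k + 3) + (k - 3) * (k - 4)"
    using nbr_two_cliques assms by simp
  also have "\<dots> = 2 * (k * k + 12)"
  proof -
    define j where "j = k - 4"
    then have "k = j + 4" using assms by simp
    then show ?thesis by (simp add: algebra_simps)
  qed
  finally show ?thesis unfolding sum_card_nbr[OF simple_graph_on_rel_edges] by simp
qed

text \<open>
  The second extremal graph, with \<open>c = 2 * (k div 2)\<close>: the vertices \<open>0..k+1\<close> span a clique
  from which the ladder on \<open>0..c-1\<close> is removed, i.e.\ the path \<open>i \<dash> i+1\<close> (closed into a cycle
  for odd \<open>k\<close>) together with the chords \<open>i \<dash> i + k div 2\<close>. The vertices \<open>k+2..2k\<close> span a
  clique, and vertex \<open>k+2+j\<close> is bridged to \<open>j\<close> and \<open>j+1\<close> (for odd \<open>k\<close> the last one to \<open>k-2\<close>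
  and \<open>0\<close>). A vertex below \<open>c\<close> loses one neighbour more to the ladder than it gains by
  bridges, so only the vertices \<open>c..k+1\<close> have degree \<open>k + 1\<close>, and they see just \<open>0..k+1\<close>.
\<close>

definition ladder :: "nat \<Rightarrow> nat \<Rightarrow> nat \<Rightarrow> bool" where
  "ladder k i i' \<longleftrightarrow> i' = i + 1 \<or> i = i' + 1 \<or> i' = i + k div 2 \<or> i = i' + k div 2
     \<or> (odd k \<and> ((i = 0 \<and> i' = 2 * (k div 2) - 1) \<or> (i' = 0 \<and> i = 2 * (k div 2) - 1)))"

definition bridge :: "nat \<Rightarrow> nat \<Rightarrow> nat \<Rightarrow> bool" where
  "bridge k i j \<longleftrightarrow> j < k - 1 \<and> i < 2 * (k div 2) \<and> (i = j \<or> i = j + 1 \<or> (odd k \<and> j = k - 2 \<and> i = 0))"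

lemma card_ladder_nbrs_even:
  assumes k: "k = 2 * h" and h: "3 \<le> h" and x: "x < k"
  shows "card {i. i < 2 * (k div 2) \<and> ladder k x i} = card {j. bridge k x j} + 1 \<and> card {j. bridge k x j} \<le> 2"
proof -
  have kd: "k div 2 = h" using k by simp
  consider "x = 0" | "x = k - 1" | "0 < x \<and> x < k - 1 \<and> x < h" | "0 < x \<and> x < k - 1 \<and> h \<le> x"
    using x by linarith
  then show ?thesis
  proof cases
    case 1
    have "{i. i < 2 * (k div 2) \<and> ladder k x i} = {1, h}" "{j. bridge k x j} = {0}"
      using 1 k h by (auto simp: ladder_def bridge_def kd)
    then show ?thesis using h by simp
  next
    case 2
    have "{i. i < 2 * (k div 2) \<and> ladder k x i} = {k - 2, h - 1}" "{j. bridge k x j} = {k - 2}"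
      using 2 k h by (auto simp: ladder_def bridge_def kd)
    then show ?thesis using h k by simp
  next
    case 3
    have "{i. i < 2 * (k div 2) \<and> ladder k x i} = {x - 1, x + 1, x + h}" "{j. bridge k x j} = {x, x - 1}"
      using 3 k h by (auto simp: ladder_def bridge_def kd)
    moreover have "x - 1 \<noteq> x + h" "x + 1 \<noteq> x + h" "x - 1 \<noteq> x" using 3 h by auto
    ultimately show ?thesis using 3 by simp
  next
    case 4
    have "{i. i < 2 * (k div 2) \<and> ladder k x i} = {x - 1, x + 1, x - h}" "{j. bridge k x j} = {x, x - 1}"
      using 4 k h by (auto simp: ladder_def bridge_def kd)
    moreover have "x - 1 \<noteq> x - h" "x + 1 \<noteq> x - h" "x - 1 \<noteq> x" using 4 h by auto
    ultimately show ?thesis using 4 by simp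
  qed
qed

lemma card_ladder_nbrs_odd:
  assumes k: "k = 2 * h + 1" and h: "3 \<le> h" and x: "x < k - 1"
  shows "card {i. i < 2 * (k div 2) \<and> ladder k x i} = card {j. bridge k x j} + 1 \<and> card {j. bridge k x j} \<le> 2"
proof -
  have kd: "k div 2 = h" using k by simp
  consider "x = 0" | "x = k - 2" | "0 < x \<and> x < k - 2 \<and> x < h" | "0 < x \<and> x < k - 2 \<and> h \<le> x"
    using x by linarith
  then show ?thesis
  proof cases
    case 1
    have "{i. i < 2 * (k div 2) \<and> ladder k x i} = {1, h, 2 * h - 1}" "{j. bridge k x j} = {0, 2 * h - 1}"
      using 1 k h by (auto simp: ladder_def bridge_def kd)
    then show ?thesis using h by simp
  next
    case 2
    have "{i. i < 2 * (k div 2) \<and> ladder k x i} = {2 * h - 2, h - 1, 0}" "{j. bridge k x j} = {2 * h - 1, 2 * h - 2}"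
      using 2 k h by (auto simp: ladder_def bridge_def kd)
    then show ?thesis using h k by simp
  next
    case 3
    have "{i. i < 2 * (k div 2) \<and> ladder k x i} = {x - 1, x + 1, x + h}" "{j. bridge k x j} = {x, x - 1}"
      using 3 k h by (auto simp: ladder_def bridge_def kd)
    moreover have "x - 1 \<noteq> x + h" "x + 1 \<noteq> x + h" "x - 1 \<noteq> x" using 3 h by auto
    ultimately show ?thesis using 3 by simp
  next
    case 4
    have "{i. i < 2 * (k div 2) \<and> ladder k x i} = {x - 1, x + 1, x - h}" "{j. bridge k x j} = {x, x - 1}"
      using 4 k h by (auto simp: ladder_def bridge_def kd)
    moreover have "x - 1 \<noteq> x - h" "x + 1 \<noteq> x - h" "x - 1 \<noteq> x" using 4 h by auto
    ultimately show ?thesis using 4 by simp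
  qed
qed

lemma card_ladder_nbrs:
  assumes "6 \<le> k" "x < 2 * (k div 2)"
  shows "card {i. i < 2 * (k div 2) \<and> ladder k x i} = card {j. bridge k x j} + 1"
    and "card {j. bridge k x j} \<le> 2"
proof -
  have "card {i. i < 2 * (k div 2) \<and> ladder k x i} = card {j. bridge k x j} + 1 \<and> card {j. bridge k x j} \<le> 2"
  proof (cases "even k")
    case True
    then obtain h where "k = 2 * h" by blast
    then show ?thesis using card_ladder_nbrs_even assms by simp
  next
    case False
    then obtain h where "k = 2 * h + 1" using oddE by blast
    then show ?thesis using card_ladder_nbrs_odd assms by simp
  qed
  then show "card {i. i < 2 * (k div 2) \<and> ladder k x i} = card {j. bridge k x j} + 1"
    and "card {j. bridge k x j} \<le> 2" by simp_all
qed

lemma card_bridge_nbrs: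
  assumes "6 \<le> k" "j < k - 1"
  shows "card {i. bridge k i j} = 2"
proof (cases "odd k \<and> j = k - 2")
  case True
  then have "{i. bridge k i j} = {j, 0}" using assms by (auto simp: bridge_def elim!: oddE)
  then show ?thesis using True assms by simp
next
  case False
  then have "{i. bridge k i j} = {j, j + 1}" using assms by (auto simp: bridge_def elim!: oddE)
  then show ?thesis by simp
qed

definition ladder_graph :: "nat \<Rightarrow> nat \<Rightarrow> nat \<Rightarrow> bool" where
  "ladder_graph k x y \<longleftrightarrow>
     (x < k + 2 \<and> y < k + 2 \<and> \<not> (x < 2 * (k div 2) \<and> y < 2 * (k div 2) \<and> ladder k x y))
     \<or> (k + 2 \<le> x \<and> k + 2 \<le> y)
     \<or> (k + 2 \<le> y \<and> bridge k x (y - (k + 2)))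
     \<or> (k + 2 \<le> x \<and> bridge k y (x - (k + 2)))"

context
  fixes k :: nat
  assumes k_ge: "6 \<le> k"
begin

abbreviation "ladder_edges \<equiv> rel_edges (2 * k + 1) (ladder_graph k)"

lemma nbr_ladder_graph:
  assumes "x < 2 * k + 1"
  shows "nbr {0..<2*k+1} ladder_edges x = {y. y < 2 * k + 1 \<and> y \<noteq> x \<and> ladder_graph k x y}"
  using assms by (intro nbr_rel_edges) (auto simp: ladder_graph_def ladder_def)

lemma nbr_ladder_graph_low:
  assumes "x < 2 * (k div 2)"
  shows "nbr {0..<2*k+1} ladder_edges x =
    ({0..<k+2} - {x} - {i. i < 2 * (k div 2) \<and> ladder k x i}) \<union> {y. k + 2 \<le> y \<and> bridge k x (y - (k + 2))}"
proof -
  have "x < 2 * k + 1" using assms by simp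
  then show ?thesis
    unfolding nbr_ladder_graph[OF \<open>x < 2 * k + 1\<close>] ladder_graph_def
    using assms by (auto simp: bridge_def)
qed

lemma nbr_ladder_graph_high:
  assumes "2 * (k div 2) \<le> x" "x < k + 2"
  shows "nbr {0..<2*k+1} ladder_edges x = {0..<k+2} - {x}"
proof -
  have "x < 2 * k + 1" using assms k_ge by simp
  then show ?thesis
    unfolding nbr_ladder_graph[OF \<open>x < 2 * k + 1\<close>] ladder_graph_def
    using assms k_ge by (auto simp: bridge_def)
qed

lemma nbr_ladder_graph_right:
  assumes "k + 2 \<le> x" "x < 2 * k + 1"
  shows "nbr {0..<2*k+1} ladder_edges x = ({k+2..<2*k+1} - {x}) \<union> {i. bridge k i (x - (k + 2))}"
  unfolding nbr_ladder_graph[OF assms(2)] ladder_graph_def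
  using assms by (auto simp: bridge_def)

lemma card_right_nbrs: "card {y. k + 2 \<le> y \<and> bridge k x (y - (k + 2))} = card {j. bridge k x j}"
proof -
  let ?R = "{y. k + 2 \<le> y \<and> bridge k x (y - (k + 2))}"
  have "(\<lambda>y. y - (k + 2)) ` ?R = {j. bridge k x j}"
  proof
    show "{j. bridge k x j} \<subseteq> (\<lambda>y. y - (k + 2)) ` ?R"
    proof
      fix j assume "j \<in> {j. bridge k x j}"
      then show "j \<in> (\<lambda>y. y - (k + 2)) ` ?R" by (intro image_eqI[of _ _ "j + (k + 2)"]) auto
    qed
  qed auto
  moreover have "inj_on (\<lambda>y. y - (k + 2)) ?R" by (auto simp: inj_on_def)
  ultimately show ?thesis using card_image by fastforce
qed

lemma finite_bridge_nbrs: "finite {i. bridge k i j}"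
  by (rule finite_subset[of _ "{..<k}"]) (use k_ge in \<open>auto simp: bridge_def\<close>)

lemma finite_right_nbrs: "finite {y. k + 2 \<le> y \<and> bridge k x (y - (k + 2))}"
  by (rule finite_subset[of _ "{..<2 * k + 1}"]) (auto simp: bridge_def)

lemma card_nbr_ladder_graph_low:
  assumes x: "x < 2 * (k div 2)"
  shows "card (nbr {0..<2*k+1} ladder_edges x) = k"
proof -
  let ?L = "{i. i < 2 * (k div 2) \<and> ladder k x i}" and ?R = "{y. k + 2 \<le> y \<and> bridge k x (y - (k + 2))}"
  have "x \<notin> ?L" using k_ge by (auto simp: ladder_def)
  then have L: "?L \<subseteq> {0..<k+2} - {x}" by auto
  have "card ({0..<k+2} - {x} - ?L) + card ?L = k + 1"
    using L x card_Diff_subset[OF finite_subset[OF L] L] card_mono[OF _ L] by simp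
  moreover have "({0..<k+2} - {x} - ?L) \<inter> ?R = {}" by auto
  ultimately show ?thesis
    using card_ladder_nbrs[OF k_ge x] card_right_nbrs finite_right_nbrs nbr_ladder_graph_low[OF x]
    by (simp add: card_Un_disjoint)
qed

lemma card_nbr_ladder_graph_high:
  assumes "2 * (k div 2) \<le> x" "x < k + 2"
  shows "card (nbr {0..<2*k+1} ladder_edges x) = k + 1"
  using nbr_ladder_graph_high[OF assms] assms by simp

lemma card_nbr_ladder_graph_right:
  assumes x: "k + 2 \<le> x" "x < 2 * k + 1"
  shows "card (nbr {0..<2*k+1} ladder_edges x) = k"
proof -
  have "({k+2..<2*k+1} - {x}) \<inter> {i. bridge k i (x - (k + 2))} = {}" by (auto simp: bridge_def)
  moreover have "card {i. bridge k i (x - (k + 2))} = 2" using card_bridge_nbrs k_ge x by simp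
  ultimately show ?thesis
    using nbr_ladder_graph_right[OF x] finite_bridge_nbrs x k_ge by (simp add: card_Un_disjoint)
qed

lemma ladder_graph_T3_free:
  "\<not> contains_copy {0..<2*k+1} ladder_edges (T3_vertices (k + 5)) (T3_edges (k + 5))"
proof
  let ?N = "nbr {0..<2*k+1} ladder_edges" and ?B = "\<lambda>w. {y. k + 2 \<le> y \<and> bridge k w (y - (k + 2))}"
  assume "contains_copy {0..<2*k+1} ladder_edges (T3_vertices (k + 5)) (T3_edges (k + 5))"
  then obtain x w where xw: "{x, w} \<in> ladder_edges" "k + 1 \<le> card (?N x)" "k + 5 \<le> card (?N x \<union> ?N w)"
    using contains_T3_imp_root_edge[OF simple_graph_on_rel_edges] by metis
  have "x < 2 * k + 1" "w < 2 * k + 1"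
    using simple_graph_on_edgeD[OF simple_graph_on_rel_edges xw(1)] by auto
  moreover have "\<not> x < 2 * (k div 2)" "\<not> k + 2 \<le> x"
    using xw(2) \<open>x < 2 * k + 1\<close> card_nbr_ladder_graph_low[of x] card_nbr_ladder_graph_right[of x]
    by auto
  ultimately have x: "2 * (k div 2) \<le> x" "x < k + 2" by simp_all
  have "w \<in> ?N x" using nbr_iff[OF simple_graph_on_rel_edges] xw(1) by blast
  then have "w < k + 2" using nbr_ladder_graph_high[OF x] by simp
  have "?N x \<union> ?N w \<subseteq> {0..<k+2} \<union> ?B w"
    using nbr_ladder_graph_high[OF x] nbr_ladder_graph_low[of w] nbr_ladder_graph_high[of w] \<open>w < k + 2\<close>
    by (cases "w < 2 * (k div 2)") auto
  then have "card (?N x \<union> ?N w) \<le> card ({0..<k+2} \<union> ?B w)"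
    using finite_right_nbrs by (intro card_mono) auto
  also have "\<dots> \<le> card {0..<k+2} + card (?B w)"
    by (rule card_Un_le)
  finally have "card (?N x \<union> ?N w) \<le> k + 2 + card {j. bridge k w j}"
    using card_right_nbrs by simp
  moreover have "card {j. bridge k w j} \<le> 2"
    using card_ladder_nbrs(2)[OF k_ge] by (cases "w < 2 * (k div 2)") (auto simp: bridge_def)
  ultimately show False using xw(3) by simp
qed

lemma card_ladder_graph: "card ladder_edges = k * k + (k + 3) div 2"
proof -
  define c where "c = 2 * (k div 2)"
  have c: "k - 1 \<le> c" "c \<le> k" by (auto simp: c_def)
  define d where "d v = card (nbr {0..<2*k+1} ladder_edges v)" for v
  have "{0..<2*k+1} = {0..<c} \<union> {c..<k+2} \<union> {k+2..<2*k+1}" using c k_ge by auto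
  then have "sum d {0..<2*k+1} = sum d ({0..<c} \<union> {c..<k+2}) + sum d {k+2..<2*k+1}"
    using c by (simp only:) (rule sum.union_disjoint, auto)
  also have "sum d ({0..<c} \<union> {c..<k+2}) = sum d {0..<c} + sum d {c..<k+2}"
    by (rule sum.union_disjoint) auto
  also have "sum d {0..<c} = c * k"
    using card_nbr_ladder_graph_low by (simp add: c_def d_def)
  also have "sum d {c..<k+2} = (k + 2 - c) * (k + 1)"
    using card_nbr_ladder_graph_high by (simp add: c_def d_def)
  also have "sum d {k+2..<2*k+1} = (k - 1) * k"
    using card_nbr_ladder_graph_right by (simp add: d_def)
  also have "c * k + (k + 2 - c) * (k + 1) + (k - 1) * k = 2 * (k * k + (k + 3) div 2)"
  proof -
    have sq: "(k - 1) * k + k = k * k" by (cases k) auto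
    show ?thesis
    proof (cases "even k")
      case True
      then have "c = k" "(k + 3) div 2 * 2 = k + 2" by (auto simp: c_def elim!: evenE)
      then show ?thesis using sq by simp
    next
      case False
      then have "c = k - 1" "(k + 3) div 2 * 2 = k + 3" by (auto simp: c_def elim!: oddE)
      then show ?thesis using sq k_ge by (simp add: algebra_simps)
    qed
  qed
  finally show ?thesis unfolding d_def sum_card_nbr[OF simple_graph_on_rel_edges] by simp
qed

end

lemma ex_eqI:
  assumes "\<And>E. simple_graph_on {0..<p} E \<Longrightarrow> \<not> contains_copy {0..<p} E VL EL \<Longrightarrow> card E \<le> m"
    and "simple_graph_on {0..<p} E0" "\<not> contains_copy {0..<p} E0 VL EL" "card E0 = m"
  shows "ex p VL EL = m"
proof -
  let ?S = "{card E | E. simple_graph_on {0..<p} E \<and> \<not> contains_copy {0..<p} E VL EL}"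
  have "?S \<subseteq> {..m}" using assms(1) by auto
  then have "finite ?S" by (rule finite_subset) simp
  moreover have "m \<in> ?S" using assms(2-4) by blast
  ultimately show ?thesis unfolding ex_def using assms(1) by (intro Max_eqI) auto
qed

lemma ex_T3:
  assumes "10 \<le> k"
  shows "ex (2 * k + 1) (T3_vertices (k + 5)) (T3_edges (k + 5)) = k * k + max ((k + 3) div 2) 12"
proof -
  have upper: "card E \<le> k * k + max ((k + 3) div 2) 12"
    if "simple_graph_on {0..<2*k+1} E" "\<not> contains_copy {0..<2*k+1} E (T3_vertices (k+5)) (T3_edges (k+5))"
    for E
  proof -
    interpret T3_free_graph "{0..<2*k+1}" E k using that assms by unfold_locales simp_all
    show ?thesis by (rule card_edges_le)
  qed
  show ?thesis
  proof (cases "(k + 3) div 2 \<le> 12")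
    case True
    then show ?thesis
      using assms upper two_cliques_T3_free card_two_cliques simple_graph_on_rel_edges
      by (intro ex_eqI[of _ _ _ _ "rel_edges (2*k+1) (two_cliques k)"]) auto
  next
    case False
    then show ?thesis
      using assms upper ladder_graph_T3_free card_ladder_graph simple_graph_on_rel_edges
      by (intro ex_eqI[of _ _ _ _ "rel_edges (2*k+1) (ladder_graph k)"]) auto
  qed
qed

theorem lemma4p6:
  fixes n :: nat
  assumes "n \<ge> 15"
  shows "int (ex (2 * n - 9) (T3_vertices n) (T3_edges n))
           = int n ^ 2 - 10 * int n + 24 + max (int n div 2) 13"
proof -
  define k where "k = n - 5"
  then have n: "n = k + 5" "2 * n - 9 = 2 * k + 1" and "10 \<le> k" using assms by auto
  then have "ex (2 * n - 9) (T3_vertices n) (T3_edges n) = k * k + max ((k + 3) div 2) 12"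
    using ex_T3 by simp
  moreover have "int n div 2 = int ((k + 3) div 2) + 1" using n(1) by (simp add: zdiv_int)
  ultimately show ?thesis
    unfolding n(1) by (simp add: of_nat_max power2_eq_square algebra_simps max_add_distrib_left)
qed

end
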